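(* Let $G=(V,E,C,\ell)$ be an edge-labeled graph with $V=\{1,\dots,n\}$ and two categories $C=\{1,2\}$. Construct a directed graph $G'$ with unit arc capacities (parallel arcs allowed, capacities added) on node set $V\cup\{s,t\}$: for every edge $\{i,j\}\in E$ with $i<j$, if $\ell(\{i,j\})=1$ add the arcs $(i,j)$ and $(j,t)$, and if $\ell(\{i,j\})=2$ add the arcs $(i,j)$ and $(s,i)$. Let $S^*\subseteq V\cup\{s,t\}$ with $s\in S^*$, $t\notin S^*$ minimize the total capacity of arcs $(a,b)$ with $a\in S^*$, $b\notin S^*$. Define the clustering $Y^*$ by $Y^*[i]=2$ if $i\in S^*$ and $Y^*[i]=1$ if $i\notin S^*$. Then $Y^*$ minimizes $\mathrm{CatEdgeClus}$ over all clusterings $V\to C$.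
   Context: An edge-labeled graph $G=(V,E,C,\ell)$ consists of a finite node set $V$, a finite collection $E$ of edges (2-element subsets of $V$), a set $C$ of categories, and a labeling $\ell:E\to C$. For a clustering $Y:V\to C$, $m_Y(e)=1$ if some endpoint $i\in e$ has $Y[i]\neq\ell(e)$, else $0$; $\mathrm{CatEdgeClus}(Y)=\sum_{e\in E}m_Y(e)$. *)

theory Defs
  imports Main "HOL-Library.Multiset"
begin

definition edge_labeled_graph :: "nat set \<Rightarrow> nat set set \<Rightarrow> nat set \<Rightarrow> (nat set \<Rightarrow> nat) \<Rightarrow> bool" where
  "edge_labeled_graph V E C ell \<longleftrightarrow> finite V \<and> finite E \<and> finite C \<and>
     (\<forall>e\<in>E. e \<subseteq> V \<and> card e = 2) \<and> (\<forall>e\<in>E. ell e \<in> C)"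

definition mistake :: "(nat \<Rightarrow> nat) \<Rightarrow> (nat set \<Rightarrow> nat) \<Rightarrow> nat set \<Rightarrow> nat" where
  "mistake Y ell e = (if \<exists>i\<in>e. Y i \<noteq> ell e then 1 else 0)"

definition CatEdgeClus :: "nat set set \<Rightarrow> (nat set \<Rightarrow> nat) \<Rightarrow> (nat \<Rightarrow> nat) \<Rightarrow> nat" where
  "CatEdgeClus E ell Y = (\<Sum>e\<in>E. mistake Y ell e)"

datatype node = Src | Snk | Nd nat

text \<open>Arcs contributed by one edge {i,j}, i<j (i = Min e, j = Max e).
  Unit capacities; parallel arcs are kept as multiset multiplicities (capacities add).\<close>
definition edge_arcs :: "(nat set \<Rightarrow> nat) \<Rightarrow> nat set \<Rightarrow> (node \<times> node) multiset" where
  "edge_arcs ell e =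
     (if ell e = 1 then {# (Nd (Min e), Nd (Max e)), (Nd (Max e), Snk) #}
      else if ell e = 2 then {# (Nd (Min e), Nd (Max e)), (Src, Nd (Min e)) #}
      else {#})"

definition arcs_G' :: "nat set set \<Rightarrow> (nat set \<Rightarrow> nat) \<Rightarrow> (node \<times> node) multiset" where
  "arcs_G' E ell = (\<Sum>e\<in>E. edge_arcs ell e)"

definition nodes_G' :: "nat \<Rightarrow> node set" where
  "nodes_G' n = {Src, Snk} \<union> Nd ` {1..n}"

definition cut_cap :: "(node \<times> node) multiset \<Rightarrow> node set \<Rightarrow> nat" where
  "cut_cap A S = size (filter_mset (\<lambda>(a,b). a \<in> S \<and> b \<notin> S) A)"

definition is_st_cut :: "nat \<Rightarrow> node set \<Rightarrow> bool" where
  "is_st_cut n S \<longleftrightarrow> S \<subseteq> nodes_G' n \<and> Src \<in> S \<and> Snk \<notin> S"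

end

theory Submission
  imports Defs
begin

text \<open>
  Read a cut \<open>S\<close> as the clustering putting exactly the nodes of \<open>S\<close> into category 2.
  For an edge \<open>{i, j}\<close>, \<open>i < j\<close>, with label 1 the arc \<open>(j,t)\<close> is cut iff \<open>j \<in> S\<close>, and
  otherwise \<open>(i,j)\<close> is cut iff \<open>i \<in> S\<close>; dually for label 2 with \<open>(s,i)\<close> and \<open>(i,j)\<close>.
  So each edge contributes exactly its mistake to the cut capacity, the capacity of a cut
  equals the cost of its clustering, and since every clustering comes from a cut, a
  minimum cut gives an optimal clustering.
\<close>

definition cut_clustering :: "node set \<Rightarrow> nat \<Rightarrow> nat" where
  "cut_clustering S = (\<lambda>i. if Nd i \<in> S then 2 else 1)"

definition clustering_cut :: "nat \<Rightarrow> (nat \<Rightarrow> nat) \<Rightarrow> node set" where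
  "clustering_cut n Y = insert Src (Nd ` {i \<in> {1..n}. Y i = 2})"

lemma cut_cap_sum: "cut_cap (\<Sum>e\<in>E. A e) S = (\<Sum>e\<in>E. cut_cap (A e) S)"
  unfolding cut_cap_def
  by (induction E rule: infinite_finite_induct) auto

lemma card_2_eq_Min_Max:
  assumes "card e = 2"
  shows "Min e < Max e" "e = {Min e, Max e}"
proof -
  obtain a b where "e = {a, b}" "a \<noteq> b"
    using assms by (meson card_2_iff)
  then show "Min e < Max e" "e = {Min e, Max e}"
    by (cases "a < b"; auto simp: min_def max_def)+
qed

lemma cut_cap_edge_arcs:
  assumes "card e = 2" "ell e \<in> {1, 2}" "Src \<in> S" "Snk \<notin> S"
  shows "cut_cap (edge_arcs ell e) S = mistake (cut_clustering S) ell e"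
proof -
  have "Min e < Max e" and e: "e = {Min e, Max e}"
    using card_2_eq_Min_Max[OF assms(1)] by auto
  moreover have "(\<exists>i\<in>e. P i) \<longleftrightarrow> P (Min e) \<or> P (Max e)" for P
    by (subst e) auto
  ultimately show ?thesis
    using assms(2-4)
    unfolding cut_cap_def edge_arcs_def mistake_def cut_clustering_def
    by auto
qed

lemma cut_cap_arcs_G':
  assumes "edge_labeled_graph V E {1, 2} ell" "Src \<in> S" "Snk \<notin> S"
  shows "cut_cap (arcs_G' E ell) S = CatEdgeClus E ell (cut_clustering S)"
  unfolding arcs_G'_def cut_cap_sum CatEdgeClus_def
  using assms cut_cap_edge_arcs unfolding edge_labeled_graph_def
  by (intro sum.cong) auto

lemma CatEdgeClus_cong:
  assumes "\<And>i. i \<in> \<Union>E \<Longrightarrow> Y i = Y' i"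
  shows "CatEdgeClus E ell Y = CatEdgeClus E ell Y'"
  unfolding CatEdgeClus_def
proof (intro sum.cong refl)
  fix e assume "e \<in> E"
  then have "\<forall>i\<in>e. Y i = Y' i"
    using assms by blast
  then show "mistake Y ell e = mistake Y' ell e"
    unfolding mistake_def by simp
qed

lemma is_st_cut_clustering_cut: "is_st_cut n (clustering_cut n Y)"
  unfolding is_st_cut_def clustering_cut_def nodes_G'_def by auto

lemma cut_clustering_clustering_cut:
  assumes "Y i \<in> {1, 2}" "i \<in> {1..n}"
  shows "cut_clustering (clustering_cut n Y) i = Y i"
  using assms unfolding cut_clustering_def clustering_cut_def by auto

theorem mainTheorem11:
  fixes n :: nat and E :: "nat set set" and ell :: "nat set \<Rightarrow> nat" and Sstar :: "node set"
  assumes G: "edge_labeled_graph {1..n} E {1, 2} ell"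
    and cut: "is_st_cut n Sstar"
    and minimal: "\<forall>S. is_st_cut n S \<longrightarrow> cut_cap (arcs_G' E ell) Sstar \<le> cut_cap (arcs_G' E ell) S"
  shows "\<forall>Y. (\<forall>i\<in>{1..n}. Y i \<in> {1, 2}) \<longrightarrow>
           CatEdgeClus E ell (\<lambda>i. if Nd i \<in> Sstar then 2 else 1) \<le> CatEdgeClus E ell Y"
proof (intro allI impI)
  fix Y :: "nat \<Rightarrow> nat"
  assume Y: "\<forall>i\<in>{1..n}. Y i \<in> {1, 2}"
  let ?S = "clustering_cut n Y"
  have "CatEdgeClus E ell (cut_clustering Sstar) = cut_cap (arcs_G' E ell) Sstar"
    using cut_cap_arcs_G'[OF G] cut unfolding is_st_cut_def by simp
  also have "\<dots> \<le> cut_cap (arcs_G' E ell) ?S"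
    using minimal is_st_cut_clustering_cut by blast
  also have "\<dots> = CatEdgeClus E ell (cut_clustering ?S)"
    using cut_cap_arcs_G'[OF G] is_st_cut_clustering_cut unfolding is_st_cut_def by simp
  also have "\<dots> = CatEdgeClus E ell Y"
    using G Y cut_clustering_clustering_cut unfolding edge_labeled_graph_def
    by (intro CatEdgeClus_cong) blast
  finally show "CatEdgeClus E ell (\<lambda>i. if Nd i \<in> Sstar then 2 else 1) \<le> CatEdgeClus E ell Y"
    unfolding cut_clustering_def .
qed

end
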